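(* For a generic implicit system on the plane with locally bounded derivatives, no critical point of its folding lies in the zero section of the tangent bundle $T\mathbb{R}^2$. In particular, near each critical point of the folding the 1-folding of the system is well defined.
   Context: An implicit system on the plane is given by a smooth map $F: T\mathbb{R}^2\to\mathbb{R}^2$; its system surface is $F^{-1}(0)$, and its folding is the restriction to the system surface of the bundle projection $T\mathbb{R}^2\to\mathbb{R}^2$; it has locally bounded derivatives if the folding is proper. The 1-folding is the restriction to the system surface (away from the zero section) of the projectivization map $T\mathbb{R}^2\setminus\{0\}\to PT\mathbb{R}^2$ sending a nonzero vector to its direction. "Generic" means belonging to some open dense subset, in the Whitney fine $C^\infty$ topology, of the space of such maps $F$. *)

theory Defs
  imports "HOL-Analysis.Analysis"
begin

fun pD :: "('a::euclidean_space \<Rightarrow> 'b::real_normed_vector) \<Rightarrow> 'a list \<Rightarrow> 'a \<Rightarrow> 'b" where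
  "pD f [] = f"
| "pD f (u # us) = (\<lambda>x. vector_derivative (\<lambda>t. pD f us (x + t *\<^sub>R u)) (at 0))"

definition smooth_map :: "('a::euclidean_space \<Rightarrow> 'b::real_normed_vector) \<Rightarrow> bool" where
  "smooth_map f \<longleftrightarrow> (\<forall>us. set us \<subseteq> Basis \<longrightarrow>
      continuous_on UNIV (pD f us) \<and>
      (\<forall>u\<in>Basis. \<forall>x. (\<lambda>t. pD f us (x + t *\<^sub>R u)) differentiable (at (0::real))))"

text \<open>Basic neighbourhoods of the Whitney C^k topology (k arbitrary: Whitney C-infinity).\<close>
definition whitney_nbhd ::
  "('a::euclidean_space \<Rightarrow> 'b::real_normed_vector) \<Rightarrow> nat \<Rightarrow> ('a \<Rightarrow> real) \<Rightarrow> ('a \<Rightarrow> 'b) set" where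
  "whitney_nbhd f k \<delta> = {g. smooth_map g \<and>
      (\<forall>us x. set us \<subseteq> Basis \<and> length us \<le> k \<longrightarrow> norm (pD g us x - pD f us x) < \<delta> x)}"

definition whitney_open :: "('a::euclidean_space \<Rightarrow> 'b::real_normed_vector) set \<Rightarrow> bool" where
  "whitney_open U \<longleftrightarrow> U \<subseteq> {f. smooth_map f} \<and>
     (\<forall>f\<in>U. \<exists>k \<delta>. continuous_on UNIV \<delta> \<and> (\<forall>x. 0 < \<delta> x) \<and> whitney_nbhd f k \<delta> \<subseteq> U)"

definition whitney_dense :: "('a::euclidean_space \<Rightarrow> 'b::real_normed_vector) set \<Rightarrow> bool" where
  "whitney_dense U \<longleftrightarrow> (\<forall>f k \<delta>. smooth_map f \<and> continuous_on UNIV \<delta> \<and> (\<forall>x. 0 < \<delta> x) \<longrightarrow>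
      whitney_nbhd f k \<delta> \<inter> U \<noteq> {})"

definition generic :: "(('a::euclidean_space \<Rightarrow> 'b::real_normed_vector) \<Rightarrow> bool) \<Rightarrow> bool" where
  "generic P \<longleftrightarrow> (\<exists>U. whitney_open U \<and> whitney_dense U \<and> (\<forall>F\<in>U. P F))"

text \<open>Implicit systems on the plane: T R^2 = R^2 x R^2, points (x, v).\<close>
type_synonym implicit_system = "(real^2) \<times> (real^2) \<Rightarrow> real^2"

definition system_surface :: "implicit_system \<Rightarrow> ((real^2) \<times> (real^2)) set" where
  "system_surface F = {p. F p = 0}"

definition zero_section :: "((real^2) \<times> (real^2)) set" where
  "zero_section = {p. snd p = 0}"

text \<open>Locally bounded derivatives: the folding (restriction of fst to the system surface) is proper.\<close>
definition locally_bounded_derivatives :: "implicit_system \<Rightarrow> bool" where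
  "locally_bounded_derivatives F \<longleftrightarrow>
     (\<forall>K. compact K \<longrightarrow> compact (system_surface F \<inter> fst -` K))"

text \<open>Critical point of the folding: a point of the system surface where the surface is
  smooth (dF surjective) and the differential of the projection restricted to the tangent
  plane ker dF is not surjective.\<close>
definition folding_critical :: "implicit_system \<Rightarrow> (real^2) \<times> (real^2) \<Rightarrow> bool" where
  "folding_critical F p \<longleftrightarrow> p \<in> system_surface F \<and>
     (\<exists>L. (F has_derivative L) (at p) \<and> surj L \<and> fst ` {w. L w = 0} \<noteq> UNIV)"

end

theory Submission
  imports Defs "HOL-Computational_Algebra.Polynomial"
begin

(* On the zero section the folding is regular wherever the fibre Jacobian dvF(x, 0) is
   invertible: then every base direction lifts to a vector in ker dF.  So it suffices that
   dvF(x, 0) is invertible at every zero (x, 0) of F.  This condition is open already in the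
   Whitney C^1 topology, because |F(x, 0)| + |det dvF(x, 0)| is a positive continuous function.
   It is dense: adding E(p) (theta0 + v1 theta1 + v2 theta2), with E > 0 a locally finite sum of
   bumps small in C^k, changes F(x, 0) and the columns of dvF(x, 0) by E(x, 0) theta0 and
   E(x, 0) thetaj (E is even in v), and the parameters theta in R^6 that leave a zero with
   singular fibre Jacobian are the image of a C^1 map of a 5-dimensional space, hence null. *)

section \<open>Calculus of smooth maps\<close>

lemma pD_append: "pD (pD f vs) us = pD f (us @ vs)"
  by (induction us) auto

declare pD.simps(2)[simp del]

lemma pD_single: "pD f [u] = (\<lambda>x. vector_derivative (\<lambda>t. f (x + t *\<^sub>R u)) (at 0))"
  by (simp add: pD.simps)

lemma pD_single_eqI:
  "((\<lambda>t. g (x + t *\<^sub>R u)) has_vector_derivative d) (at 0) \<Longrightarrow> pD g [u] x = d"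
  by (simp add: vector_derivative_at pD_single)

lemma pD_zero: "pD (\<lambda>x. 0) us = (\<lambda>x. 0)"
  by (induction us) (auto simp: pD.simps)

definition partially_differentiable :: "('a::euclidean_space \<Rightarrow> 'b::real_normed_vector) \<Rightarrow> bool" where
  "partially_differentiable g \<longleftrightarrow> continuous_on UNIV g \<and>
     (\<forall>u\<in>Basis. \<forall>x. (\<lambda>t. g (x + t *\<^sub>R u)) differentiable (at (0::real)))"

lemma partially_differentiable_has_vector_derivative:
  "partially_differentiable g \<Longrightarrow> u \<in> Basis \<Longrightarrow>
    ((\<lambda>t. g (x + t *\<^sub>R u)) has_vector_derivative pD g [u] x) (at 0)"
  unfolding partially_differentiable_def by (simp add: vector_derivative_works pD_single)

lemma smooth_map_iff_pD:
  "smooth_map f \<longleftrightarrow> (\<forall>us. set us \<subseteq> Basis \<longrightarrow> partially_differentiable (pD f us))"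
  unfolding smooth_map_def partially_differentiable_def by blast

lemma smooth_map_pD: "smooth_map f \<Longrightarrow> set vs \<subseteq> Basis \<Longrightarrow> smooth_map (pD f vs)"
  unfolding smooth_map_iff_pD pD_append by auto

lemma smooth_map_partially_differentiable: "smooth_map f \<Longrightarrow> partially_differentiable f"
  unfolding smooth_map_iff_pD by (metis empty_subsetI list.set(1) pD.simps(1))

lemma smooth_map_continuous_on: "smooth_map f \<Longrightarrow> continuous_on UNIV f"
  using smooth_map_partially_differentiable partially_differentiable_def by blast

lemma smooth_map_has_vector_derivative:
  "smooth_map f \<Longrightarrow> u \<in> Basis \<Longrightarrow>
    ((\<lambda>t. f (x + t *\<^sub>R u)) has_vector_derivative pD f [u] x) (at 0)"
  by (rule partially_differentiable_has_vector_derivative[OF smooth_map_partially_differentiable])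

lemma smooth_mapI_coinduct:
  assumes "X f"
    and step: "\<And>g. X g \<Longrightarrow> partially_differentiable g \<and> (\<forall>u\<in>Basis. X (pD g [u]))"
  shows "smooth_map f"
proof -
  have "X (pD f us)" if "set us \<subseteq> Basis" for us
    using that
  proof (induction us)
    case Nil
    then show ?case using assms(1) by simp
  next
    case (Cons u us)
    then have "X (pD (pD f us) [u])" using step by auto
    then show ?case by (simp add: pD_append)
  qed
  then show ?thesis unfolding smooth_map_iff_pD using step by blast
qed

text \<open>To show that the members of a class \<open>X\<close> are smooth it suffices that their partial
  derivatives lie in the \<open>C\<^sup>\<infinity>\<close>-module generated by \<open>X\<close> and the smooth maps.\<close>

inductive smooth_hull :: "(('a::euclidean_space \<Rightarrow> 'b::real_normed_vector) \<Rightarrow> bool) \<Rightarrow> ('a \<Rightarrow> 'b) \<Rightarrow> bool"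
  for X where
  smooth_hull_base: "X g \<Longrightarrow> smooth_hull X g"
| smooth_hull_smooth: "smooth_map g \<Longrightarrow> smooth_hull X g"
| smooth_hull_add: "smooth_hull X g \<Longrightarrow> smooth_hull X h \<Longrightarrow> smooth_hull X (\<lambda>x. g x + h x)"
| smooth_hull_scaleR:
    "smooth_map (e::'a \<Rightarrow> real) \<Longrightarrow> smooth_hull X g \<Longrightarrow> smooth_hull X (\<lambda>x. e x *\<^sub>R g x)"

lemma line_derivative_add:
  assumes "partially_differentiable g" "partially_differentiable h" "u \<in> Basis"
  shows "((\<lambda>t. g (x + t *\<^sub>R u) + h (x + t *\<^sub>R u)) has_vector_derivative pD g [u] x + pD h [u] x) (at 0)"
  using assms by (intro has_vector_derivative_add partially_differentiable_has_vector_derivative)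

lemma partially_differentiable_add:
  assumes "partially_differentiable g" "partially_differentiable h"
  shows "partially_differentiable (\<lambda>x. g x + h x)"
  using assms line_derivative_add[OF assms]
  by (auto intro: continuous_on_add differentiableI_vector simp: partially_differentiable_def)

lemma pD_single_add:
  assumes "partially_differentiable g" "partially_differentiable h" "u \<in> Basis"
  shows "pD (\<lambda>x. g x + h x) [u] = (\<lambda>x. pD g [u] x + pD h [u] x)"
  using pD_single_eqI[OF line_derivative_add[OF assms]] by auto

lemma line_derivative_scaleR:
  assumes "partially_differentiable (e::'a::euclidean_space \<Rightarrow> real)" "partially_differentiable g"
    "u \<in> Basis"
  shows "((\<lambda>t. e (x + t *\<^sub>R u) *\<^sub>R g (x + t *\<^sub>R u)) has_vector_derivative
    e x *\<^sub>R pD g [u] x + pD e [u] x *\<^sub>R g x) (at 0)"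
proof -
  have "((\<lambda>t. e (x + t *\<^sub>R u)) has_field_derivative pD e [u] x) (at 0)"
    using partially_differentiable_has_vector_derivative[OF assms(1,3)]
    by (simp add: has_real_derivative_iff_has_vector_derivative)
  then show ?thesis
    using has_vector_derivative_scaleR partially_differentiable_has_vector_derivative[OF assms(2,3)]
    by fastforce
qed

lemma partially_differentiable_scaleR:
  assumes "partially_differentiable (e::'a::euclidean_space \<Rightarrow> real)" "partially_differentiable g"
  shows "partially_differentiable (\<lambda>x. e x *\<^sub>R g x)"
  using assms line_derivative_scaleR[OF assms]
  by (auto intro: continuous_on_scaleR differentiableI_vector simp: partially_differentiable_def)

lemma pD_single_scaleR:
  assumes "partially_differentiable (e::'a::euclidean_space \<Rightarrow> real)" "partially_differentiable g"
    "u \<in> Basis"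
  shows "pD (\<lambda>x. e x *\<^sub>R g x) [u] = (\<lambda>x. e x *\<^sub>R pD g [u] x + pD e [u] x *\<^sub>R g x)"
  using pD_single_eqI[OF line_derivative_scaleR[OF assms]] by auto

lemma smooth_hull_step:
  assumes "smooth_hull X f"
    and X: "\<And>g. X g \<Longrightarrow> partially_differentiable g \<and> (\<forall>u\<in>Basis. smooth_hull X (pD g [u]))"
  shows "partially_differentiable f \<and> (\<forall>u\<in>Basis. smooth_hull X (pD f [u]))"
  using assms(1)
proof (induction rule: smooth_hull.induct)
  case (smooth_hull_base g)
  then show ?case using X by blast
next
  case (smooth_hull_smooth g)
  then show ?case
    using smooth_map_partially_differentiable smooth_map_pD[of g "[u]" for u]
    by (auto intro: smooth_hull.smooth_hull_smooth)
next
  case (smooth_hull_add g h)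
  then show ?case
    by (auto simp: partially_differentiable_add pD_single_add intro: smooth_hull.smooth_hull_add)
next
  case (smooth_hull_scaleR e g)
  then have "smooth_hull X (\<lambda>x. e x *\<^sub>R pD g [u] x + pD e [u] x *\<^sub>R g x)" if "u \<in> Basis" for u
    using that smooth_map_pD[of e "[u]"]
    by (auto intro!: smooth_hull.smooth_hull_add smooth_hull.smooth_hull_scaleR)
  moreover have "partially_differentiable e"
    using smooth_hull_scaleR(1) by (rule smooth_map_partially_differentiable)
  ultimately show ?case
    using smooth_hull_scaleR by (simp add: partially_differentiable_scaleR pD_single_scaleR)
qed

lemma smooth_hull_imp_smooth_map:
  assumes "smooth_hull X f"
    and "\<And>g. X g \<Longrightarrow> partially_differentiable g \<and> (\<forall>u\<in>Basis. smooth_hull X (pD g [u]))"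
  shows "smooth_map f"
  using assms(1) by (rule smooth_mapI_coinduct[where X="smooth_hull X"]) (use smooth_hull_step assms(2) in blast)

lemma smooth_map_add: "smooth_map f \<Longrightarrow> smooth_map g \<Longrightarrow> smooth_map (\<lambda>x. f x + g x)"
  by (rule smooth_hull_imp_smooth_map[where X="\<lambda>_. False"]) (auto intro: smooth_hull.intros)

lemma smooth_map_scaleR:
  "smooth_map (e::_ \<Rightarrow> real) \<Longrightarrow> smooth_map g \<Longrightarrow> smooth_map (\<lambda>x. e x *\<^sub>R g x)"
  by (rule smooth_hull_imp_smooth_map[where X="\<lambda>_. False"]) (auto intro: smooth_hull.intros)

lemma smooth_map_mult:
  "smooth_map (e::_ \<Rightarrow> real) \<Longrightarrow> smooth_map g \<Longrightarrow> smooth_map (\<lambda>x. e x * g x)"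
  using smooth_map_scaleR[of e g] by simp

lemma smooth_map_const: "smooth_map (\<lambda>x. c)"
proof (rule smooth_hull_imp_smooth_map[where X="\<lambda>g. \<exists>c. g = (\<lambda>x. c)"])
  fix g :: "'a \<Rightarrow> 'b"
  assume "\<exists>c. g = (\<lambda>x. c)"
  then obtain c where g: "g = (\<lambda>x. c)" by auto
  have "pD g [u] = (\<lambda>x. 0)" for u
    using pD_single_eqI[of g _ u 0] g by auto
  then show "partially_differentiable g \<and> (\<forall>u\<in>Basis. smooth_hull (\<lambda>g. \<exists>c. g = (\<lambda>x. c)) (pD g [u]))"
    using g by (auto intro: smooth_hull.intros simp: partially_differentiable_def)
qed (auto intro: smooth_hull.intros)

lemma smooth_map_diff: "smooth_map f \<Longrightarrow> smooth_map g \<Longrightarrow> smooth_map (\<lambda>x. f x - g x)"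
  using smooth_map_add[of f "\<lambda>x. (- 1) *\<^sub>R g x"] smooth_map_scaleR[OF smooth_map_const, of g "- 1"]
  by simp

lemma smooth_map_bounded_linear: assumes "bounded_linear L" shows "smooth_map L"
proof (rule smooth_hull_imp_smooth_map[where X="\<lambda>g. g = L"])
  fix g
  assume g: "g = L"
  have dv: "((\<lambda>t. L (x + t *\<^sub>R u)) has_vector_derivative L u) (at 0)" for x u
  proof -
    have "((\<lambda>t. x + t *\<^sub>R u) has_vector_derivative u) (at 0)"
      by (auto intro!: derivative_eq_intros)
    then show ?thesis using bounded_linear.has_vector_derivative[OF assms] by blast
  qed
  have "pD g [u] = (\<lambda>x. L u)" for u using pD_single_eqI[OF dv] g by auto
  then show "partially_differentiable g \<and> (\<forall>u\<in>Basis. smooth_hull (\<lambda>g. g = L) (pD g [u]))"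
    using g dv assms
    by (auto intro: smooth_hull.intros smooth_map_const linear_continuous_on differentiableI_vector
        simp: partially_differentiable_def)
qed (rule smooth_hull_base, simp)

lemma smooth_map_inner_self: "smooth_map (\<lambda>x::'a::euclidean_space. x \<bullet> x)"
proof (rule smooth_hull_imp_smooth_map[where X="\<lambda>h. h = (\<lambda>x::'a. x \<bullet> x)"])
  fix h :: "'a \<Rightarrow> real"
  assume h: "h = (\<lambda>x. x \<bullet> x)"
  have dv: "((\<lambda>t. (x + t *\<^sub>R u) \<bullet> (x + t *\<^sub>R u)) has_vector_derivative 2 * (x \<bullet> u)) (at 0)"
    for x u :: 'a
  proof -
    have "(\<lambda>t. (x + t *\<^sub>R u) \<bullet> (x + t *\<^sub>R u)) = (\<lambda>t. x \<bullet> x + 2 * t * (x \<bullet> u) + t\<^sup>2 * (u \<bullet> u))"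
      by (auto simp: inner_add_left inner_add_right inner_commute power2_eq_square algebra_simps)
    moreover have "((\<lambda>t. x \<bullet> x + 2 * t * (x \<bullet> u) + t\<^sup>2 * (u \<bullet> u)) has_real_derivative 2 * (x \<bullet> u)) (at 0)"
      by (auto intro!: derivative_eq_intros)
    ultimately show ?thesis by (simp add: has_real_derivative_iff_has_vector_derivative)
  qed
  have "pD h [u] = (\<lambda>x. 2 * (x \<bullet> u))" for u using pD_single_eqI[OF dv] h by auto
  moreover have "smooth_map (\<lambda>x::'a. 2 * (x \<bullet> u))" for u
    by (rule smooth_map_bounded_linear) (intro bounded_linear_const_mult bounded_linear_inner_left)
  ultimately show "partially_differentiable h \<and> (\<forall>u\<in>Basis. smooth_hull (\<lambda>h. h = (\<lambda>x::'a. x \<bullet> x)) (pD h [u]))"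
    using h dv
    by (auto intro!: smooth_hull_smooth differentiableI_vector continuous_intros
        simp: partially_differentiable_def)
qed (auto intro: smooth_hull_base)

lemma smooth_map_compose_derivative_tower:
  assumes D: "\<And>j s. (D j has_real_derivative D (Suc j) s) (at s)"
    and g: "smooth_map (g::'a::euclidean_space \<Rightarrow> real)"
  shows "smooth_map (\<lambda>x. D j (g x))"
proof (rule smooth_hull_imp_smooth_map[where X="\<lambda>h. \<exists>j. h = (\<lambda>x. D j (g x))"])
  fix h
  assume "\<exists>j. h = (\<lambda>x. D j (g x))"
  then obtain j where h: "h = (\<lambda>x. D j (g x))" by auto
  have contD: "continuous_on UNIV (D j)" for j
    using D by (meson DERIV_isCont continuous_at_imp_continuous_on)
  have dv: "((\<lambda>t. D j (g (x + t *\<^sub>R u))) has_vector_derivative pD g [u] x * D (Suc j) (g x)) (at 0)"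
    if "u \<in> Basis" for x u j
  proof -
    have "((\<lambda>t. g (x + t *\<^sub>R u)) has_real_derivative pD g [u] x) (at 0)"
      using smooth_map_has_vector_derivative[OF g that]
      by (simp add: has_real_derivative_iff_has_vector_derivative)
    from DERIV_chain2[OF D this] show ?thesis
      by (simp add: has_real_derivative_iff_has_vector_derivative mult.commute)
  qed
  have "pD h [u] = (\<lambda>x. pD g [u] x *\<^sub>R D (Suc j) (g x))" if "u \<in> Basis" for u
    using pD_single_eqI[OF dv[OF that]] h by auto
  moreover have "continuous_on UNIV h"
    unfolding h using continuous_on_compose2[OF contD smooth_map_continuous_on[OF g]] by auto
  moreover have "smooth_hull (\<lambda>h. \<exists>j. h = (\<lambda>x. D j (g x))) (\<lambda>x. pD g [u] x *\<^sub>R D (Suc j) (g x))"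
    if "u \<in> Basis" for u
    by (rule smooth_hull_scaleR[OF smooth_map_pD[OF g, of "[u]"]])
      (use that in \<open>auto intro!: smooth_hull_base\<close>)
  ultimately show "partially_differentiable h \<and>
      (\<forall>u\<in>Basis. smooth_hull (\<lambda>h. \<exists>j. h = (\<lambda>x. D j (g x))) (pD h [u]))"
    using h dv by (auto intro!: differentiableI_vector simp: partially_differentiable_def)
qed (auto intro: smooth_hull_base)

lemma pD_add:
  assumes "smooth_map f" "smooth_map g" "set us \<subseteq> Basis"
  shows "pD (\<lambda>x. f x + g x) us = (\<lambda>x. pD f us x + pD g us x)"
  using assms(3)
proof (induction us)
  case Nil
  then show ?case by simp
next
  case (Cons u us)
  then have f: "smooth_map (pD f us)" and g: "smooth_map (pD g us)" and u: "u \<in> Basis"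
    using assms smooth_map_pD by auto
  have "pD (\<lambda>x. f x + g x) (u # us) = pD (pD (\<lambda>x. f x + g x) us) [u]"
    by (simp add: pD_append)
  also have "\<dots> = pD (\<lambda>x. pD f us x + pD g us x) [u]"
    using Cons by simp
  also have "\<dots> = (\<lambda>x. pD (pD f us) [u] x + pD (pD g us) [u] x)"
    using f g u by (intro pD_single_add smooth_map_partially_differentiable)
  finally show ?case by (simp add: pD_append)
qed

lemma pD_bounded_linear:
  assumes "bounded_linear L" "smooth_map f" "set us \<subseteq> Basis"
  shows "pD (\<lambda>x. L (f x)) us = (\<lambda>x. L (pD f us x))"
  using assms(3)
proof (induction us)
  case Nil
  then show ?case by simp
next
  case (Cons u us)
  then have f: "smooth_map (pD f us)" and u: "u \<in> Basis"
    using assms smooth_map_pD by auto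
  have "pD (\<lambda>x. L (f x)) (u # us) = pD (pD (\<lambda>x. L (f x)) us) [u]"
    by (simp add: pD_append)
  also have "\<dots> = pD (\<lambda>x. L (pD f us x)) [u]"
    using Cons by simp
  also have "\<dots> = (\<lambda>x. L (pD (pD f us) [u] x))"
    using pD_single_eqI[OF bounded_linear.has_vector_derivative[OF assms(1)
          smooth_map_has_vector_derivative[OF f u]]] by auto
  finally show ?case by (simp add: pD_append)
qed

lemma smooth_map_sum:
  assumes "finite N" "\<And>n. n \<in> N \<Longrightarrow> smooth_map (f n)"
  shows "smooth_map (\<lambda>x. \<Sum>n\<in>N. f n x)"
  using assms by (induction N rule: finite_induct) (simp_all add: smooth_map_const smooth_map_add)

lemma pD_sum:
  assumes "finite N" "\<And>n. n \<in> N \<Longrightarrow> smooth_map (f n)" "set us \<subseteq> Basis"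
  shows "pD (\<lambda>x. \<Sum>n\<in>N. f n x) us = (\<lambda>x. \<Sum>n\<in>N. pD (f n) us x)"
  using assms(1,2)
  by (induction N rule: finite_induct) (simp_all add: pD_zero pD_add smooth_map_sum assms(3))

lemma eventually_line_in_open:
  fixes x u :: "'a::real_normed_vector"
  assumes "open S" "x \<in> S"
  shows "eventually (\<lambda>t::real. x + t *\<^sub>R u \<in> S) (nhds 0)"
proof -
  have "open ((\<lambda>t::real. x + t *\<^sub>R u) -` S)"
    by (rule open_vimage[OF assms(1)]) (intro continuous_intros)
  moreover have "0 \<in> (\<lambda>t::real. x + t *\<^sub>R u) -` S" using assms by simp
  ultimately show ?thesis using eventually_nhds_in_open by fastforce
qed

lemma pD_cong_open:
  assumes "open S" "\<And>y. y \<in> S \<Longrightarrow> g y = h y" "x \<in> S"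
  shows "pD g us x = pD h us x"
  using assms(3)
proof (induction us arbitrary: x)
  case Nil
  then show ?case using assms by simp
next
  case (Cons u us)
  have "eventually (\<lambda>t. pD g us (x + t *\<^sub>R u) = pD h us (x + t *\<^sub>R u)) (nhds 0)"
    using eventually_line_in_open[OF assms(1) Cons.prems, of u] Cons.IH by (auto elim!: eventually_mono)
  then have "vector_derivative (\<lambda>t. pD g us (x + t *\<^sub>R u)) (at 0) =
      vector_derivative (\<lambda>t. pD h us (x + t *\<^sub>R u)) (at 0)"
    by (intro vector_derivative_cong_eq[where A=UNIV and B=UNIV]) (auto elim!: eventually_mono)
  then show ?case by (simp add: pD.simps)
qed

lemma smooth_map_locally:
  assumes "\<And>x. \<exists>S h. open S \<and> x \<in> S \<and> smooth_map h \<and> (\<forall>y\<in>S. g y = h y)"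
  shows "smooth_map g"
proof (rule smooth_mapI_coinduct[where X="\<lambda>g. \<forall>x. \<exists>S h. open S \<and> x \<in> S \<and> smooth_map h \<and> (\<forall>y\<in>S. g y = h y)"])
  fix g :: "'a \<Rightarrow> 'b"
  assume L: "\<forall>x. \<exists>S h. open S \<and> x \<in> S \<and> smooth_map h \<and> (\<forall>y\<in>S. g y = h y)"
  have "continuous_on UNIV g"
  proof (rule continuous_at_imp_continuous_on, intro ballI)
    fix x
    obtain S h where Sh: "open S" "x \<in> S" "smooth_map h" "\<forall>y\<in>S. g y = h y" using L by blast
    have "isCont h x"
      using smooth_map_continuous_on[OF Sh(3)] by (simp add: continuous_on_eq_continuous_at)
    moreover have "eventually (\<lambda>y. h y = g y) (nhds x)"
      using eventually_nhds_in_open[OF Sh(1,2)] by (rule eventually_mono) (use Sh(4) in auto)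
    ultimately show "isCont g x"
      using isCont_cong by blast
  qed
  moreover have "(\<lambda>t. g (x + t *\<^sub>R u)) differentiable (at 0) \<and>
      (\<exists>S h. open S \<and> x \<in> S \<and> smooth_map h \<and> (\<forall>y\<in>S. pD g [u] y = h y))"
    if u: "u \<in> Basis" for u x
  proof -
    obtain S h where Sh: "open S" "x \<in> S" "smooth_map h" "\<forall>y\<in>S. g y = h y" using L by blast
    have ev: "eventually (\<lambda>t. t \<in> UNIV \<longrightarrow> h (x + t *\<^sub>R u) = g (x + t *\<^sub>R u)) (nhds 0)"
      using eventually_line_in_open[OF Sh(1,2), of u] Sh(4) by (auto elim!: eventually_mono)
    have "((\<lambda>t. g (x + t *\<^sub>R u)) has_vector_derivative pD h [u] x) (at 0)"
      using has_vector_derivative_cong_ev[OF ev] smooth_map_has_vector_derivative[OF Sh(3) u, of x] Sh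
      by simp
    then show ?thesis
      using pD_cong_open[OF Sh(1), of g h] smooth_map_pD[OF Sh(3), of "[u]"] Sh u
      by (intro conjI differentiableI_vector exI[of _ S] exI[of _ "pD h [u]"]) auto
  qed
  ultimately show "partially_differentiable g \<and>
      (\<forall>u\<in>Basis. \<forall>x. \<exists>S h. open S \<and> x \<in> S \<and> smooth_map h \<and> (\<forall>y\<in>S. pD g [u] y = h y))"
    unfolding partially_differentiable_def by blast
qed (use assms in auto)

section \<open>A flat function\<close>

text \<open>\<open>flat_deriv j\<close> is the \<open>j\<close>-th derivative of the flat function \<open>exp (-1/s)\<close> (extended by \<open>0\<close>
  for \<open>s \<le> 0\<close>); on \<open>s > 0\<close> it has the form \<open>P\<^sub>j(1/s) exp (-1/s)\<close> with \<open>P\<^sub>j = flat_poly j\<close>.\<close>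

fun flat_poly :: "nat \<Rightarrow> real poly" where
  "flat_poly 0 = 1"
| "flat_poly (Suc j) = [:0, 0, 1:] * (flat_poly j - pderiv (flat_poly j))"

definition flat_deriv :: "nat \<Rightarrow> real \<Rightarrow> real" where
  "flat_deriv j s = (if s > 0 then poly (flat_poly j) (1/s) * exp (- 1/s) else 0)"

lemma tendsto_poly_times_div_exp_at_top: "((\<lambda>z. poly p z * z / exp z) \<longlongrightarrow> (0::real)) at_top"
proof -
  have "(\<lambda>z. poly p z * z / exp z) = (\<lambda>z. \<Sum>i\<le>degree p. coeff p i * (z ^ Suc i / exp z))"
    by (rule ext) (simp add: poly_altdef sum_distrib_left sum_divide_distrib mult_ac)
  moreover have "((\<lambda>z. \<Sum>i\<le>degree p. coeff p i * (z ^ Suc i / exp z)) \<longlongrightarrow> (\<Sum>i\<le>degree p. coeff p i * 0)) at_top"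
    by (intro tendsto_sum tendsto_mult tendsto_const tendsto_power_div_exp_0)
  ultimately show ?thesis by simp
qed

lemma flat_deriv_has_derivative_0: "(flat_deriv j has_real_derivative 0) (at 0)"
proof -
  have "((\<lambda>y. poly (flat_poly j) (inverse y) * inverse y / exp (inverse y)) \<longlongrightarrow> 0) (at_right 0)"
    using filterlim_compose[OF tendsto_poly_times_div_exp_at_top filterlim_inverse_at_top_right]
    by (simp add: o_def)
  moreover have "eventually (\<lambda>y. poly (flat_poly j) (inverse y) * inverse y / exp (inverse y) =
      flat_deriv j y / y) (at_right (0::real))"
    using eventually_at_right_less[of 0]
    by eventually_elim (simp add: flat_deriv_def exp_minus inverse_eq_divide)
  ultimately have right: "((\<lambda>y. flat_deriv j y / y) \<longlongrightarrow> 0) (at_right 0)"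
    by (rule Lim_transform_eventually)
  have "eventually (\<lambda>y. y \<in> {-1<..<0}) (at_left (0::real))"
    by (rule eventually_at_left_real) simp
  then have "eventually (\<lambda>y. 0 = flat_deriv j y / y) (at_left (0::real))"
    by eventually_elim (auto simp: flat_deriv_def)
  then have left: "((\<lambda>y. flat_deriv j y / y) \<longlongrightarrow> 0) (at_left 0)"
    by (rule Lim_transform_eventually[OF tendsto_const])
  have "((\<lambda>y. flat_deriv j y / y) \<longlongrightarrow> 0) (at 0)"
    using filterlim_split_at[OF left right] .
  then show ?thesis by (simp add: DERIV_def flat_deriv_def)
qed

lemma flat_deriv_has_derivative: "(flat_deriv j has_real_derivative flat_deriv (Suc j) s) (at s)"
proof (cases s "0::real" rule: linorder_cases)
  case less
  have zero: "((\<lambda>_. 0) has_real_derivative 0) (at s)" by simp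
  then show ?thesis
    using has_field_derivative_transform_within_open[OF zero, of "{..<0}" "flat_deriv j"] less
    by (simp add: flat_deriv_def)
next
  case equal
  then show ?thesis using flat_deriv_has_derivative_0 by (simp add: flat_deriv_def)
next
  case greater
  let ?p = "flat_poly j"
  have "((\<lambda>s. poly ?p (1/s) * exp (- 1/s)) has_real_derivative
      poly (pderiv ?p) (1/s) * (- 1 / s\<^sup>2) * exp (- 1/s) + poly ?p (1/s) * (exp (- 1/s) * (1 / s\<^sup>2))) (at s)"
    using greater
    by (auto intro!: derivative_eq_intros DERIV_chain2[OF poly_DERIV] simp: power2_eq_square field_simps)
  moreover have "poly (pderiv ?p) (1/s) * (- 1 / s\<^sup>2) * exp (- 1/s) + poly ?p (1/s) * (exp (- 1/s) * (1 / s\<^sup>2)) =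
      flat_deriv (Suc j) s"
    using greater by (simp add: flat_deriv_def algebra_simps power2_eq_square)
  ultimately have "((\<lambda>s. poly ?p (1/s) * exp (- 1/s)) has_real_derivative flat_deriv (Suc j) s) (at s)"
    by simp
  then show ?thesis
    by (rule has_field_derivative_transform_within_open[where S="{0<..}"]) (use greater in \<open>auto simp: flat_deriv_def\<close>)
qed

lemma flat_deriv_0_pos: "s > 0 \<Longrightarrow> flat_deriv 0 s > 0"
  by (simp add: flat_deriv_def)

lemma flat_deriv_0_nonneg: "flat_deriv 0 s \<ge> 0"
  by (simp add: flat_deriv_def)

lemma flat_deriv_nonpos: "s \<le> 0 \<Longrightarrow> flat_deriv j s = 0"
  by (simp add: flat_deriv_def)

lemma has_vector_derivative_line_shift:
  assumes "\<And>y. ((\<lambda>\<tau>. h (y + \<tau> *\<^sub>R e)) has_vector_derivative D (y::'a::real_normed_vector)) (at 0)"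
  shows "((\<lambda>s. h (y + s *\<^sub>R e)) has_vector_derivative D (y + s0 *\<^sub>R e)) (at s0)"
proof -
  have "((\<lambda>s. s - s0) has_vector_derivative 1) (at s0)"
    by (auto intro!: derivative_eq_intros simp: has_real_derivative_iff_has_vector_derivative[symmetric])
  moreover have "((\<lambda>\<tau>. h ((y + s0 *\<^sub>R e) + \<tau> *\<^sub>R e)) has_vector_derivative D (y + s0 *\<^sub>R e))
      (at ((\<lambda>s. s - s0) s0))"
    using assms[of "y + s0 *\<^sub>R e"] by simp
  ultimately have "((\<lambda>\<tau>. h ((y + s0 *\<^sub>R e) + \<tau> *\<^sub>R e)) \<circ> (\<lambda>s. s - s0) has_vector_derivative
      1 *\<^sub>R D (y + s0 *\<^sub>R e)) (at s0)"
    by (rule vector_diff_chain_at)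
  moreover have "(\<lambda>\<tau>. h ((y + s0 *\<^sub>R e) + \<tau> *\<^sub>R e)) \<circ> (\<lambda>s. s - s0) = (\<lambda>s. h (y + s *\<^sub>R e))"
    by (auto simp: o_def algebra_simps)
  ultimately show ?thesis by simp
qed

lemma vector_2_eq_axis: "(x::real^2) = x$1 *\<^sub>R axis 1 1 + x$2 *\<^sub>R axis 2 1"
  by (simp add: vec_eq_iff forall_2 axis_def)

lemma differentiable_real_pair_partials:
  fixes k :: "real \<times> real \<Rightarrow> 'c::real_normed_vector"
  assumes partial1: "\<And>s t. ((\<lambda>s. k (s, t)) has_vector_derivative D1 (s, t)) (at s)"
    and partial2: "\<And>s t. ((\<lambda>t. k (s, t)) has_vector_derivative D2 (s, t)) (at t)"
    and C: "continuous_on UNIV D2"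
  shows "k differentiable (at z)"
proof -
  obtain s0 t0 where z: "z = (s0, t0)" by fastforce
  have "continuous_on UNIV (\<lambda>p. blinfun_scaleR_left (D2 p))"
    by (rule continuous_on_compose2[OF linear_continuous_on[OF bounded_linear_blinfun_scaleR_left] C]) auto
  moreover have "(\<lambda>(s, t). blinfun_scaleR_left (D2 (s, t))) = (\<lambda>p. blinfun_scaleR_left (D2 p))"
    by auto
  ultimately have "continuous (at (s0, t0) within UNIV \<times> UNIV) (\<lambda>(s, t). blinfun_scaleR_left (D2 (s, t)))"
    by (simp add: continuous_on_eq_continuous_at)
  moreover have "((\<lambda>s. k (s, t)) has_derivative (\<lambda>ds. ds *\<^sub>R D1 (s, t))) (at s within UNIV)" for s t
    using partial1 by (simp add: has_vector_derivative_def)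
  moreover have "((\<lambda>t. k (s, t)) has_derivative blinfun_scaleR_left (D2 (s, t))) (at t within UNIV)" for s t
    using partial2 by (simp add: has_vector_derivative_def)
  ultimately have "((\<lambda>(s, t). k (s, t)) has_derivative
      (\<lambda>(ds, dt). ds *\<^sub>R D1 (s0, t0) + blinfun_scaleR_left (D2 (s0, t0)) dt)) (at (s0, t0) within UNIV \<times> UNIV)"
    by (intro has_derivative_partialsI) auto
  then show ?thesis
    unfolding z differentiable_def by auto
qed

lemma differentiable_vector_2_partials:
  fixes h :: "real^2 \<Rightarrow> 'c::real_normed_vector"
  assumes D: "\<And>x i. ((\<lambda>t. h (x + t *\<^sub>R axis i 1)) has_vector_derivative Dh i x) (at 0)"
    and C: "\<And>i. continuous_on UNIV (Dh i)"
  shows "h differentiable (at x)"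
proof -
  define \<iota> where "\<iota> = (\<lambda>p::real \<times> real. fst p *\<^sub>R axis 1 1 + snd p *\<^sub>R (axis 2 1 :: real^2))"
  have "((\<lambda>s. h (\<iota> (s, t))) has_vector_derivative Dh 1 (\<iota> (s, t))) (at s)" for s t
    using has_vector_derivative_line_shift[of h "axis 1 1" "Dh 1" "t *\<^sub>R axis 2 1" s, OF D]
    by (simp add: \<iota>_def add.commute)
  moreover have "((\<lambda>t. h (\<iota> (s, t))) has_vector_derivative Dh 2 (\<iota> (s, t))) (at t)" for s t
    using has_vector_derivative_line_shift[of h "axis 2 1" "Dh 2" "s *\<^sub>R axis 1 1" t, OF D]
    by (simp add: \<iota>_def)
  moreover have "continuous_on UNIV (\<lambda>p. Dh 2 (\<iota> p))"
    unfolding \<iota>_def by (rule continuous_on_compose2[OF C]) (auto intro!: continuous_intros)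
  ultimately have "(\<lambda>p. h (\<iota> p)) differentiable (at (x$1, x$2))"
    by (rule differentiable_real_pair_partials)
  moreover have "(\<lambda>x::real^2. (x$1, x$2)) differentiable (at x)"
    by (intro bounded_linear_imp_differentiable bounded_linear_Pair bounded_linear_vec_nth)
  ultimately have "((\<lambda>p. h (\<iota> p)) \<circ> (\<lambda>x::real^2. (x$1, x$2))) differentiable (at x)"
    by (intro differentiable_chain_at) auto
  moreover have "(\<lambda>p. h (\<iota> p)) \<circ> (\<lambda>x::real^2. (x$1, x$2)) = h"
    by (rule ext) (simp add: \<iota>_def vector_2_eq_axis[symmetric])
  ultimately show ?thesis by simp
qed

lemma even_has_real_derivative_0:
  fixes g :: "real \<Rightarrow> real"
  assumes d: "(g has_real_derivative d) (at 0)" and even: "\<And>t. g (- t) = g t"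
  shows "d = 0"
proof -
  have "(g has_real_derivative d) (at (- 0))"
    using d by simp
  then have "((\<lambda>x. g (- x)) has_real_derivative - d) (at 0)"
    using DERIV_mirror by blast
  moreover have "(\<lambda>x. g (- x)) = g"
    using even by auto
  ultimately have "(g has_real_derivative - d) (at 0)"
    by simp
  then have "d = - d"
    using DERIV_unique[OF d] by blast
  then show ?thesis by simp
qed

definition polar_dir :: "real \<Rightarrow> real^2" where
  "polar_dir \<phi> = cos \<phi> *\<^sub>R axis 1 1 + sin \<phi> *\<^sub>R axis 2 1"

lemma polar_dir_nth [simp]: "polar_dir \<phi> $ 1 = cos \<phi>" "polar_dir \<phi> $ 2 = sin \<phi>"
  unfolding polar_dir_def by (simp_all add: axis_def)

lemma differentiable_polar_dir: "polar_dir differentiable (at t)"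
proof -
  have "(polar_dir has_vector_derivative (- sin t *\<^sub>R axis 1 1 + cos t *\<^sub>R axis 2 1)) (at t)"
    unfolding polar_dir_def[abs_def] by (auto intro!: derivative_eq_intros)
  then show ?thesis by (rule differentiableI_vector)
qed

lemma vector_2_polar:
  fixes v :: "real^2"
  obtains \<phi> r where "v = r *\<^sub>R polar_dir \<phi>"
proof (cases "v = 0")
  case True
  then show ?thesis using that[of 0 0] by simp
next
  case False
  define r where "r = sqrt ((v$1)\<^sup>2 + (v$2)\<^sup>2)"
  have "(v$1)\<^sup>2 + (v$2)\<^sup>2 \<noteq> 0"
    using False by (simp add: vec_eq_iff forall_2 sum_power2_eq_zero_iff)
  then have pos: "(v$1)\<^sup>2 + (v$2)\<^sup>2 > 0"
    by (simp add: add_nonneg_nonneg order_le_neq_trans)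
  then have r: "r > 0" "r\<^sup>2 = (v$1)\<^sup>2 + (v$2)\<^sup>2"
    unfolding r_def by simp_all
  have "(v$1 / r)\<^sup>2 + (v$2 / r)\<^sup>2 = ((v$1)\<^sup>2 + (v$2)\<^sup>2) / r\<^sup>2"
    by (simp add: power_divide add_divide_distrib)
  also have "\<dots> = 1"
    unfolding r(2) using pos by (intro divide_self) linarith
  finally obtain \<phi> where "v$1 / r = cos \<phi>" "v$2 / r = sin \<phi>"
    by (rule sincos_total_2pi) auto
  then have "v = r *\<^sub>R polar_dir \<phi>"
    using r by (simp add: vec_eq_iff forall_2 field_simps)
  then show ?thesis by (rule that)
qed

lemma det2_eq_0_imp_common_direction:
  fixes a b :: "real^2"
  assumes "a$1 * b$2 - a$2 * b$1 = 0"
  obtains \<phi> \<alpha> \<beta> where "a = \<alpha> *\<^sub>R polar_dir \<phi>" "b = \<beta> *\<^sub>R polar_dir \<phi>"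
proof (cases "a = 0")
  case True
  obtain \<phi> r where "b = r *\<^sub>R polar_dir \<phi>" by (rule vector_2_polar)
  then show ?thesis using True that[of 0 \<phi> r] by simp
next
  case False
  obtain \<phi> r where a: "a = r *\<^sub>R polar_dir \<phi>" by (rule vector_2_polar)
  with False have "r \<noteq> 0" by auto
  moreover have "r * (cos \<phi> * b$2 - sin \<phi> * b$1) = 0"
    using assms a by (simp add: algebra_simps)
  ultimately have h: "cos \<phi> * b$2 = sin \<phi> * b$1"
    by simp
  define \<beta> where "\<beta> = cos \<phi> * b$1 + sin \<phi> * b$2"
  have "\<beta> * cos \<phi> - (cos \<phi> * cos \<phi> + sin \<phi> * sin \<phi>) * b$1 = sin \<phi> * (cos \<phi> * b$2 - sin \<phi> * b$1)"
    "\<beta> * sin \<phi> - (cos \<phi> * cos \<phi> + sin \<phi> * sin \<phi>) * b$2 = cos \<phi> * (sin \<phi> * b$1 - cos \<phi> * b$2)"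
    unfolding \<beta>_def by (simp_all only: algebra_simps)
  then have "\<beta> * cos \<phi> = b$1" "\<beta> * sin \<phi> = b$2"
    using h by (simp_all only: sin_cos_squared_add3 mult_1 right_minus_eq diff_self mult_zero_right)
  then have "b = \<beta> *\<^sub>R polar_dir \<phi>"
    by (simp add: vec_eq_iff forall_2)
  then show ?thesis using a that by blast
qed

lemma det2_nonzero_imp_solvable:
  fixes a b r :: "real^2"
  assumes d: "a$1 * b$2 - a$2 * b$1 \<noteq> 0"
  shows "\<exists>\<beta>1 \<beta>2. r + \<beta>1 *\<^sub>R a + \<beta>2 *\<^sub>R b = 0"
proof -
  define d where "d = a$1 * b$2 - a$2 * b$1"
  define \<beta>1 where "\<beta>1 = (r$2 * b$1 - r$1 * b$2) / d"
  define \<beta>2 where "\<beta>2 = (r$1 * a$2 - r$2 * a$1) / d"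
  have "r$1 + \<beta>1 * a$1 + \<beta>2 * b$1 = 0"
    using d unfolding \<beta>1_def \<beta>2_def d_def by (simp add: field_simps | simp add: algebra_simps)+
  moreover have "r$2 + \<beta>1 * a$2 + \<beta>2 * b$2 = 0"
    using d unfolding \<beta>1_def \<beta>2_def d_def by (simp add: field_simps | simp add: algebra_simps)+
  ultimately have "r + \<beta>1 *\<^sub>R a + \<beta>2 *\<^sub>R b = 0"
    by (simp add: vec_eq_iff forall_2)
  then show ?thesis by blast
qed

lemma det2_perturb_nonzero:
  fixes a1 a2 b1 b2 e1 e2 e3 e4 d c :: real
  assumes "\<bar>e1\<bar> < d" "\<bar>e2\<bar> < d" "\<bar>e3\<bar> < d" "\<bar>e4\<bar> < d" "d \<le> 1"
    and "d * (\<bar>a1\<bar> + \<bar>a2\<bar> + \<bar>b1\<bar> + \<bar>b2\<bar> + 3) \<le> c + \<bar>a1 * b2 - a2 * b1\<bar>" "c < d"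
  shows "(a1 + e1) * (b2 + e4) - (a2 + e2) * (b1 + e3) \<noteq> 0"
proof -
  have "\<bar>a1 * e4\<bar> \<le> \<bar>a1\<bar> * d" "\<bar>e1 * b2\<bar> \<le> d * \<bar>b2\<bar>" "\<bar>a2 * e3\<bar> \<le> \<bar>a2\<bar> * d" "\<bar>e2 * b1\<bar> \<le> d * \<bar>b1\<bar>"
    using assms(1-4) unfolding abs_mult by (auto intro: mult_left_mono mult_right_mono)
  moreover have "\<bar>e1 * e4\<bar> \<le> d" "\<bar>e2 * e3\<bar> \<le> d"
    using mult_mono[of "\<bar>e1\<bar>" 1 "\<bar>e4\<bar>" d] mult_mono[of "\<bar>e2\<bar>" 1 "\<bar>e3\<bar>" d] assms(1-5)
    unfolding abs_mult by auto
  moreover have "\<bar>a1 * e4 + e1 * b2 + e1 * e4 - a2 * e3 - e2 * b1 - e2 * e3\<bar> \<le>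
      \<bar>a1 * e4\<bar> + \<bar>e1 * b2\<bar> + \<bar>e1 * e4\<bar> + \<bar>a2 * e3\<bar> + \<bar>e2 * b1\<bar> + \<bar>e2 * e3\<bar>"
    by (intro order.trans[OF abs_triangle_ineq4] order.trans[OF abs_triangle_ineq] add_mono order.refl
        | simp only: abs_minus_cancel)+
  ultimately have "\<bar>a1 * e4 + e1 * b2 + e1 * e4 - a2 * e3 - e2 * b1 - e2 * e3\<bar> \<le>
      \<bar>a1\<bar> * d + d * \<bar>b2\<bar> + d + \<bar>a2\<bar> * d + d * \<bar>b1\<bar> + d"
    by linarith
  moreover have "d * (\<bar>a1\<bar> + \<bar>a2\<bar> + \<bar>b1\<bar> + \<bar>b2\<bar> + 3) = \<bar>a1\<bar> * d + d * \<bar>b2\<bar> + \<bar>a2\<bar> * d + d * \<bar>b1\<bar> + 3 * d"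
    by (simp add: algebra_simps)
  moreover have "(a1 + e1) * (b2 + e4) - (a2 + e2) * (b1 + e3) =
      (a1 * b2 - a2 * b1) + (a1 * e4 + e1 * b2 + e1 * e4 - a2 * e3 - e2 * b1 - e2 * e3)"
    by (simp add: algebra_simps)
  ultimately show ?thesis using assms(6,7) by linarith
qed

section \<open>Fibre regular systems\<close>

type_synonym tangent_point = "(real^2) \<times> (real^2)"

lemma axis_base_in_Basis: "(axis i 1 :: real^2, 0 :: real^2) \<in> Basis"
  by (simp add: Basis_prod_def)

lemma axis_fibre_in_Basis: "(0 :: real^2, axis i 1 :: real^2) \<in> Basis"
  by (simp add: Basis_prod_def)

lemma continuous_on_zero_section_restrict:
  fixes g :: "tangent_point \<Rightarrow> 'c::real_normed_vector"
  assumes "smooth_map g"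
  shows "continuous_on UNIV (\<lambda>x. g (x, 0))"
  by (rule continuous_on_compose2[OF smooth_map_continuous_on[OF assms]]) (auto intro!: continuous_intros)

lemma differentiable_zero_section_restrict:
  fixes g :: "tangent_point \<Rightarrow> 'c::real_normed_vector"
  assumes "smooth_map g"
  shows "(\<lambda>x. g (x, 0)) differentiable (at x)"
proof (rule differentiable_vector_2_partials[where Dh="\<lambda>i x. pD g [(axis i 1, 0)] (x, 0)"])
  fix x i
  show "((\<lambda>t. g (x + t *\<^sub>R axis i 1, 0)) has_vector_derivative pD g [(axis i 1, 0)] (x, 0)) (at 0)"
    using smooth_map_has_vector_derivative[OF assms axis_base_in_Basis, of "(x, 0)"] by simp
next
  fix i :: 2
  show "continuous_on UNIV (\<lambda>x. pD g [(axis i 1, 0)] (x, 0))"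
    by (rule continuous_on_zero_section_restrict[OF smooth_map_pD[OF assms]]) (simp add: axis_base_in_Basis)
qed

definition fibre_partial :: "implicit_system \<Rightarrow> 2 \<Rightarrow> real^2 \<Rightarrow> real^2" where
  "fibre_partial F j x = pD F [(0, axis j 1)] (x, 0)"

definition fibre_jacobian_det :: "implicit_system \<Rightarrow> real^2 \<Rightarrow> real" where
  "fibre_jacobian_det F x =
     fibre_partial F 1 x $ 1 * fibre_partial F 2 x $ 2 - fibre_partial F 1 x $ 2 * fibre_partial F 2 x $ 1"

definition fibre_regular :: "implicit_system \<Rightarrow> bool" where
  "fibre_regular F \<longleftrightarrow> (\<forall>x. F (x, 0) = 0 \<longrightarrow> fibre_jacobian_det F x \<noteq> 0)"

lemma continuous_on_fibre_partial: "smooth_map F \<Longrightarrow> continuous_on UNIV (fibre_partial F j)"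
  unfolding fibre_partial_def[abs_def]
  by (rule continuous_on_zero_section_restrict[OF smooth_map_pD]) (auto simp: axis_fibre_in_Basis)

lemma continuous_on_fibre_jacobian_det:
  assumes "smooth_map F"
  shows "continuous_on UNIV (fibre_jacobian_det F)"
  unfolding fibre_jacobian_det_def[abs_def]
  by (intro continuous_intros continuous_on_fibre_partial[OF assms])

lemma has_derivative_imp_line_derivative:
  assumes "(F has_derivative L) (at p)"
  shows "((\<lambda>t. F (p + t *\<^sub>R u)) has_vector_derivative L u) (at 0)"
proof -
  have line: "((\<lambda>t::real. p + t *\<^sub>R u) has_derivative (\<lambda>t. t *\<^sub>R u)) (at 0)"
    by (auto intro!: derivative_eq_intros)
  have "((\<lambda>t. F (p + t *\<^sub>R u)) has_derivative (\<lambda>t. L (t *\<^sub>R u))) (at 0)"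
    using has_derivative_compose[OF line, of F L] assms by simp
  moreover have "L (t *\<^sub>R u) = t *\<^sub>R L u" for t
    using assms has_derivative_linear linear_scale by blast
  ultimately show ?thesis by (simp add: has_vector_derivative_def)
qed

lemma fibre_regular_not_folding_critical:
  assumes F: "smooth_map F" "fibre_regular F" and crit: "folding_critical F p"
  shows "p \<notin> zero_section"
proof
  assume "p \<in> zero_section"
  then obtain x where p: "p = (x, 0)" unfolding zero_section_def by (cases p) auto
  from crit obtain L where F0: "F (x, 0) = 0" and L: "(F has_derivative L) (at (x, 0))"
    and not_onto: "fst ` {w. L w = 0} \<noteq> UNIV"
    unfolding folding_critical_def system_surface_def p by auto
  have lin: "linear L" using L has_derivative_linear by blast
  have column: "L (0, axis j 1) = fibre_partial F j x" for j
    using has_derivative_imp_line_derivative[OF L]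
      smooth_map_has_vector_derivative[OF F(1) axis_fibre_in_Basis]
    unfolding fibre_partial_def by (metis vector_derivative_unique_at)
  have "y \<in> fst ` {w. L w = 0}" for y
  proof -
    obtain \<beta>1 \<beta>2 where \<beta>: "L (y, 0) + \<beta>1 *\<^sub>R fibre_partial F 1 x + \<beta>2 *\<^sub>R fibre_partial F 2 x = 0"
      using det2_nonzero_imp_solvable F(2) F0
      unfolding fibre_regular_def fibre_jacobian_det_def by blast
    define w where "w = (y, \<beta>1 *\<^sub>R axis 1 1 + \<beta>2 *\<^sub>R (axis 2 1 :: real^2))"
    have "w = (y, 0) + \<beta>1 *\<^sub>R (0, axis 1 1) + \<beta>2 *\<^sub>R (0, axis 2 1)"
      by (simp add: w_def)
    then have "L w = 0"
      using \<beta> by (simp only: linear_add[OF lin] linear_scale[OF lin] column)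
    then show ?thesis
      by (intro image_eqI[of _ _ w]) (auto simp: w_def)
  qed
  then show False using not_onto by auto
qed

definition fibre_regular_systems :: "implicit_system set" where
  "fibre_regular_systems = {F. smooth_map F \<and> fibre_regular F}"

text \<open>The \<open>C\<^sup>1\<close>-closeness that preserves a nonzero determinant is measured against
  \<open>\<bar>F(x, 0)\<bar> + \<bar>det \<partial>\<^sub>vF(x, 0)\<bar>\<close>, which is positive everywhere when \<open>F\<close> is fibre regular.\<close>

lemma fibre_regular_C1_perturb:
  assumes G0: "G (x, 0) = 0"
    and close: "norm (G (x, 0) - F (x, 0)) < d" "\<And>j. norm (fibre_partial G j x - fibre_partial F j x) < d"
    and d: "d \<le> 1"
      "d * (2 * (norm (fibre_partial F 1 x) + norm (fibre_partial F 2 x)) + 3) \<le>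
         norm (F (x, 0)) + \<bar>fibre_jacobian_det F x\<bar>"
  shows "fibre_jacobian_det G x \<noteq> 0"
proof -
  let ?a = "fibre_partial F" and ?b = "fibre_partial G"
  have e: "\<bar>?b j x $ i - ?a j x $ i\<bar> < d" for i j
    using le_less_trans[OF component_le_norm_cart close(2)] by simp
  have F0: "norm (F (x, 0)) < d"
    using close(1) G0 by simp
  have "\<bar>?a 1 x $ 1\<bar> + \<bar>?a 1 x $ 2\<bar> + \<bar>?a 2 x $ 1\<bar> + \<bar>?a 2 x $ 2\<bar> \<le>
      2 * (norm (?a 1 x) + norm (?a 2 x))"
    using component_le_norm_cart[of "?a 1 x" 1] component_le_norm_cart[of "?a 2 x" 1]
      component_le_norm_cart[of "?a 1 x" 2] component_le_norm_cart[of "?a 2 x" 2]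
    by simp
  then have "d * (\<bar>?a 1 x $ 1\<bar> + \<bar>?a 1 x $ 2\<bar> + \<bar>?a 2 x $ 1\<bar> + \<bar>?a 2 x $ 2\<bar> + 3) \<le>
      d * (2 * (norm (?a 1 x) + norm (?a 2 x)) + 3)"
    using order.strict_trans1[OF norm_ge_zero F0] by (intro mult_left_mono) auto
  also have "\<dots> \<le> norm (F (x, 0)) + \<bar>?a 1 x $ 1 * ?a 2 x $ 2 - ?a 1 x $ 2 * ?a 2 x $ 1\<bar>"
    using d(2) unfolding fibre_jacobian_det_def .
  finally have "(?a 1 x $ 1 + (?b 1 x $ 1 - ?a 1 x $ 1)) * (?a 2 x $ 2 + (?b 2 x $ 2 - ?a 2 x $ 2)) -
      (?a 1 x $ 2 + (?b 1 x $ 2 - ?a 1 x $ 2)) * (?a 2 x $ 1 + (?b 2 x $ 1 - ?a 2 x $ 1)) \<noteq> 0"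
    by (rule det2_perturb_nonzero[OF e e e e d(1) _ F0])
  then show ?thesis unfolding fibre_jacobian_det_def by simp
qed

lemma fibre_regular_margin:
  assumes F: "smooth_map F" "fibre_regular F"
  shows "\<exists>\<delta> :: tangent_point \<Rightarrow> real. continuous_on UNIV \<delta> \<and> (\<forall>p. 0 < \<delta> p \<and> \<delta> p \<le> 1) \<and>
    (\<forall>x. \<delta> (x, 0) * (2 * (norm (fibre_partial F 1 x) + norm (fibre_partial F 2 x)) + 3) \<le>
      norm (F (x, 0)) + \<bar>fibre_jacobian_det F x\<bar>)"
proof -
  define M where "M = (\<lambda>x. 2 * (norm (fibre_partial F 1 x) + norm (fibre_partial F 2 x)) + 3)"
  define h where "h = (\<lambda>x. norm (F (x, 0)) + \<bar>fibre_jacobian_det F x\<bar>)"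
  define \<delta> where "\<delta> = (\<lambda>p::tangent_point. min 1 (h (fst p) / M (fst p)))"
  have M: "M x > 0" for x
    unfolding M_def by (simp add: add_nonneg_pos)
  have h: "h x > 0" for x
    using F(2) unfolding h_def fibre_regular_def by (cases "F (x, 0) = 0") (auto intro: add_pos_nonneg)
  have "continuous_on UNIV M"
    unfolding M_def by (intro continuous_intros continuous_on_fibre_partial[OF F(1)])
  then have M': "continuous_on UNIV (\<lambda>p::tangent_point. M (fst p))"
    by (rule continuous_on_compose2) (auto intro: continuous_intros)
  have "continuous_on UNIV h"
    unfolding h_def
    by (intro continuous_intros continuous_on_zero_section_restrict[OF F(1)]
        continuous_on_fibre_jacobian_det[OF F(1)])
  then have h': "continuous_on UNIV (\<lambda>p::tangent_point. h (fst p))"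
    by (rule continuous_on_compose2) (auto intro: continuous_intros)
  have "continuous_on UNIV \<delta>"
    unfolding \<delta>_def using M
    by (intro continuous_on_min continuous_on_const continuous_on_divide h' M') (auto simp: less_imp_neq[symmetric])
  moreover have "0 < \<delta> p" for p
    unfolding \<delta>_def using h M by simp
  moreover have "\<delta> p \<le> 1" for p
    unfolding \<delta>_def by simp
  moreover have "\<delta> (x, 0) * M x \<le> h x" for x
  proof -
    have "\<delta> (x, 0) \<le> h x / M x"
      unfolding \<delta>_def by simp
    then show ?thesis
      using M[of x] by (simp add: pos_le_divide_eq)
  qed
  ultimately show ?thesis
    unfolding M_def h_def by blast
qed

lemma whitney_open_fibre_regular_systems: "whitney_open fibre_regular_systems"
  unfolding whitney_open_def
proof (intro conjI ballI)
  show "fibre_regular_systems \<subseteq> {f. smooth_map f}"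
    unfolding fibre_regular_systems_def by auto
  fix F
  assume "F \<in> fibre_regular_systems"
  then have "smooth_map F" "fibre_regular F"
    unfolding fibre_regular_systems_def by auto
  then obtain \<delta> :: "tangent_point \<Rightarrow> real" where \<delta>: "continuous_on UNIV \<delta>" "\<And>p. 0 < \<delta> p" "\<And>p. \<delta> p \<le> 1"
    "\<And>x. \<delta> (x, 0) * (2 * (norm (fibre_partial F 1 x) + norm (fibre_partial F 2 x)) + 3) \<le>
      norm (F (x, 0)) + \<bar>fibre_jacobian_det F x\<bar>"
    using fibre_regular_margin by blast
  have "G \<in> fibre_regular_systems" if "G \<in> whitney_nbhd F 1 \<delta>" for G
  proof -
    from that have G: "smooth_map G"
      and close: "\<And>us y. set us \<subseteq> Basis \<Longrightarrow> length us \<le> 1 \<Longrightarrow> norm (pD G us y - pD F us y) < \<delta> y"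
      unfolding whitney_nbhd_def by auto
    have columns: "norm (fibre_partial G j x - fibre_partial F j x) < \<delta> (x, 0)" for j x
      using close[of "[(0, axis j 1)]"] axis_fibre_in_Basis[of j] unfolding fibre_partial_def by simp
    have "fibre_jacobian_det G x \<noteq> 0" if "G (x, 0) = 0" for x
      by (rule fibre_regular_C1_perturb[where G=G and x=x, OF that _ columns \<delta>(3,4)])
        (use close[of "[]"] in simp)
    then show ?thesis
      using G unfolding fibre_regular_systems_def fibre_regular_def by auto
  qed
  then show "\<exists>k \<delta>. continuous_on UNIV \<delta> \<and> (\<forall>x. 0 < \<delta> x) \<and> whitney_nbhd F k \<delta> \<subseteq> fibre_regular_systems"
    using \<delta>(1,2) by blast
qed

section \<open>Bump perturbations\<close>

text \<open>Smooth bumps supported on the annuli \<open>\<bar>p \<bullet> p - n\<bar> < 1\<close>; these cover \<open>T\<real>\<^sup>2\<close> and every point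
  lies in at most two of them.\<close>

definition annulus_bump :: "nat \<Rightarrow> tangent_point \<Rightarrow> real" where
  "annulus_bump n p = flat_deriv 0 (1 - (p \<bullet> p - real n) * (p \<bullet> p - real n))"

definition fibre_bump :: "nat \<Rightarrow> 2 \<Rightarrow> tangent_point \<Rightarrow> real" where
  "fibre_bump n j p = annulus_bump n p * snd p $ j"

definition annulus :: "nat \<Rightarrow> tangent_point set" where
  "annulus n = {p. real n - 1 \<le> p \<bullet> p \<and> p \<bullet> p \<le> real n + 1}"

lemma smooth_map_annulus_bump: "smooth_map (annulus_bump n)"
proof -
  have "smooth_map (\<lambda>p::tangent_point. 1 - (p \<bullet> p - real n) * (p \<bullet> p - real n))"
    by (intro smooth_map_diff smooth_map_mult smooth_map_const smooth_map_inner_self)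
  then show ?thesis
    unfolding annulus_bump_def[abs_def]
    by (rule smooth_map_compose_derivative_tower[where D=flat_deriv, OF flat_deriv_has_derivative])
qed

lemma smooth_map_fibre_bump: "smooth_map (fibre_bump n j)"
proof -
  have "smooth_map (\<lambda>p::tangent_point. snd p $ j)"
    by (intro smooth_map_bounded_linear bounded_linear_compose[OF bounded_linear_vec_nth bounded_linear_snd])
  then show ?thesis
    unfolding fibre_bump_def[abs_def] by (intro smooth_map_mult smooth_map_annulus_bump)
qed

lemma annulus_bump_eq_0: "1 \<le> \<bar>p \<bullet> p - real n\<bar> \<Longrightarrow> annulus_bump n p = 0"
proof -
  assume "1 \<le> \<bar>p \<bullet> p - real n\<bar>"
  then have "1 * 1 \<le> \<bar>p \<bullet> p - real n\<bar> * \<bar>p \<bullet> p - real n\<bar>"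
    by (intro mult_mono) auto
  then have "1 - (p \<bullet> p - real n) * (p \<bullet> p - real n) \<le> 0"
    by (simp add: abs_mult[symmetric])
  then show ?thesis unfolding annulus_bump_def by (rule flat_deriv_nonpos)
qed

lemma annulus_bump_nonneg: "annulus_bump n p \<ge> 0"
  unfolding annulus_bump_def by (rule flat_deriv_0_nonneg)

lemma annulus_bump_pos: "\<bar>p \<bullet> p - real n\<bar> < 1 \<Longrightarrow> annulus_bump n p > 0"
proof -
  assume "\<bar>p \<bullet> p - real n\<bar> < 1"
  then have "\<bar>p \<bullet> p - real n\<bar> * \<bar>p \<bullet> p - real n\<bar> < 1 * 1"
    by (intro mult_strict_mono) auto
  then have "1 - (p \<bullet> p - real n) * (p \<bullet> p - real n) > 0"
    by (simp add: abs_mult[symmetric])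
  then show ?thesis unfolding annulus_bump_def by (rule flat_deriv_0_pos)
qed

lemma compact_annulus: "compact (annulus n)"
proof -
  have "closed (annulus n)"
    unfolding annulus_def by (intro closed_Collect_conj closed_Collect_le continuous_intros)
  moreover have "norm p \<le> real n + 2" if "p \<in> annulus n" for p
  proof (cases "norm p \<le> 1")
    case False
    then have "norm p \<le> norm p * norm p" by (simp add: mult_le_cancel_left1)
    also have "\<dots> = p \<bullet> p" by (simp add: power2_norm_eq_inner[symmetric] power2_eq_square)
    finally show ?thesis using that unfolding annulus_def by auto
  qed auto
  then have "bounded (annulus n)" unfolding bounded_iff by blast
  ultimately show ?thesis by (simp add: compact_eq_bounded_closed)
qed

definition basis_words :: "nat \<Rightarrow> tangent_point list set" where
  "basis_words k = {us. set us \<subseteq> Basis \<and> length us \<le> k}"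

lemma finite_basis_words: "finite (basis_words k)"
  unfolding basis_words_def by (rule finite_lists_length_le) simp

definition bump_jet_bound :: "nat \<Rightarrow> nat \<Rightarrow> tangent_point \<Rightarrow> real" where
  "bump_jet_bound k n p = (\<Sum>us\<in>basis_words k.
     \<bar>pD (annulus_bump n) us p\<bar> + \<bar>pD (fibre_bump n 1) us p\<bar> + \<bar>pD (fibre_bump n 2) us p\<bar>)"

lemma continuous_on_bump_jet_bound: "continuous_on UNIV (bump_jet_bound k n)"
proof -
  have c: "continuous_on UNIV (pD f us)" if "smooth_map f" "us \<in> basis_words k"
    for f :: "tangent_point \<Rightarrow> real" and us
    using smooth_map_continuous_on[OF smooth_map_pD[OF that(1)]] that(2) unfolding basis_words_def by auto
  show ?thesis
    unfolding bump_jet_bound_def[abs_def]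
    by (intro continuous_on_sum continuous_intros c smooth_map_annulus_bump smooth_map_fibre_bump)
qed

lemma bump_jet_bound_nonneg: "bump_jet_bound k n p \<ge> 0"
  unfolding bump_jet_bound_def by (intro sum_nonneg) auto

text \<open>The weights \<open>a n\<close> are chosen so that the \<open>n\<close>-th bump contributes at most \<open>\<delta>/4 \<cdot> 2\<^sup>-\<^sup>n\<close>
  to every derivative of order \<open>\<le> k\<close>; compactness of the annulus makes this possible.\<close>

lemma exists_bump_weight:
  assumes "continuous_on UNIV \<delta>" "\<And>p. 0 < \<delta> p"
  shows "\<exists>a>0. \<forall>p\<in>annulus n. a * bump_jet_bound k n p \<le> \<delta> p / 4 * (1/2)^n"
proof (cases "annulus n = {}")
  case True
  then show ?thesis by (intro exI[of _ 1]) auto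
next
  case False
  define f where "f = (\<lambda>p. \<delta> p / (4 * 2^n * (1 + bump_jet_bound k n p)))"
  have pos: "1 + bump_jet_bound k n p > 0" for p
    using bump_jet_bound_nonneg[of k n p] by simp
  have "continuous_on (annulus n) f"
    unfolding f_def using pos
    by (intro continuous_intros continuous_on_subset[OF assms(1)]
        continuous_on_subset[OF continuous_on_bump_jet_bound]) (auto simp: less_imp_neq[symmetric])
  then obtain p0 where p0: "p0 \<in> annulus n" "\<And>p. p \<in> annulus n \<Longrightarrow> f p0 \<le> f p"
    using continuous_attains_inf[OF compact_annulus False] by blast
  have f0: "f p0 > 0"
    unfolding f_def using assms(2)[of p0] pos[of p0] by simp
  have "f p0 * bump_jet_bound k n p \<le> \<delta> p / 4 * (1/2)^n" if "p \<in> annulus n" for p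
  proof -
    have "f p0 * bump_jet_bound k n p \<le> f p0 * (1 + bump_jet_bound k n p)"
      using f0 by simp
    also have "\<dots> \<le> f p * (1 + bump_jet_bound k n p)"
      using p0(2)[OF that] pos[of p] by (intro mult_right_mono) auto
    also have "\<dots> = \<delta> p * (1 + bump_jet_bound k n p) / ((4 * 2^n) * (1 + bump_jet_bound k n p))"
      unfolding f_def by simp
    also have "\<dots> = \<delta> p / 4 * (1/2)^n"
      using pos[of p] by (simp add: power_one_over)
    finally show ?thesis .
  qed
  then show ?thesis using f0 by blast
qed

definition bump_sum :: "(nat \<Rightarrow> real) \<Rightarrow> tangent_point \<Rightarrow> real" where
  "bump_sum a p = (\<Sum>n<nat \<lceil>p \<bullet> p\<rceil> + 1. a n * annulus_bump n p)"

type_synonym perturbation_param = "(real^2) \<times> (real^2) \<times> (real^2)"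

definition fibre_affine :: "perturbation_param \<Rightarrow> tangent_point \<Rightarrow> real^2" where
  "fibre_affine \<theta> p = fst \<theta> + snd p $ 1 *\<^sub>R fst (snd \<theta>) + snd p $ 2 *\<^sub>R snd (snd \<theta>)"

definition perturbation :: "(nat \<Rightarrow> real) \<Rightarrow> perturbation_param \<Rightarrow> tangent_point \<Rightarrow> real^2" where
  "perturbation a \<theta> p = bump_sum a p *\<^sub>R fibre_affine \<theta> p"

definition bump_term :: "perturbation_param \<Rightarrow> nat \<Rightarrow> tangent_point \<Rightarrow> real^2" where
  "bump_term \<theta> n p = annulus_bump n p *\<^sub>R fst \<theta> + fibre_bump n 1 p *\<^sub>R fst (snd \<theta>) +
     fibre_bump n 2 p *\<^sub>R snd (snd \<theta>)"

definition bumps_near :: "tangent_point \<Rightarrow> nat" where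
  "bumps_near p0 = nat \<lceil>p0 \<bullet> p0\<rceil> + 2"

lemma bump_sum_local:
  assumes "p \<bullet> p < p0 \<bullet> p0 + 1"
  shows "bump_sum a p = (\<Sum>n<bumps_near p0. a n * annulus_bump n p)"
proof -
  have "\<lceil>p \<bullet> p\<rceil> \<le> \<lceil>p0 \<bullet> p0\<rceil> + 1"
    using assms by (metis ceiling_add_one ceiling_mono less_imp_le)
  then have le: "nat \<lceil>p \<bullet> p\<rceil> + 1 \<le> bumps_near p0"
    unfolding bumps_near_def by linarith
  have "a n * annulus_bump n p = 0" if "n \<in> {..<bumps_near p0} - {..<nat \<lceil>p \<bullet> p\<rceil> + 1}" for n
  proof -
    have "nat \<lceil>p \<bullet> p\<rceil> + 1 \<le> n" using that by auto
    then have "1 \<le> \<bar>p \<bullet> p - real n\<bar>"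
      using le_of_int_ceiling[of "p \<bullet> p"] by linarith
    then show ?thesis using annulus_bump_eq_0 by simp
  qed
  then show ?thesis
    unfolding bump_sum_def using le by (intro sum.mono_neutral_left) auto
qed

lemma perturbation_local:
  assumes "p \<bullet> p < p0 \<bullet> p0 + 1"
  shows "perturbation a \<theta> p = (\<Sum>n<bumps_near p0. a n *\<^sub>R bump_term \<theta> n p)"
proof -
  have summand: "annulus_bump n p *\<^sub>R fibre_affine \<theta> p = bump_term \<theta> n p" for n
    unfolding bump_term_def fibre_affine_def fibre_bump_def by (simp add: scaleR_add_right)
  show ?thesis
    unfolding perturbation_def bump_sum_local[OF assms] scaleR_sum_left by (simp flip: summand)
qed

lemma open_inner_self_less: "open {p :: tangent_point. p \<bullet> p < c}"
  by (intro open_Collect_less continuous_intros)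

lemma smooth_map_bump_term: "smooth_map (bump_term \<theta> n)"
  unfolding bump_term_def[abs_def]
  by (intro smooth_map_add smooth_map_scaleR smooth_map_annulus_bump smooth_map_fibre_bump smooth_map_const)

lemma smooth_map_perturbation: "smooth_map (perturbation a \<theta>)"
proof (rule smooth_map_locally)
  fix p0
  show "\<exists>S h. open S \<and> p0 \<in> S \<and> smooth_map h \<and> (\<forall>y\<in>S. perturbation a \<theta> y = h y)"
    using perturbation_local open_inner_self_less
    by (intro exI[of _ "{p. p \<bullet> p < p0 \<bullet> p0 + 1}"] exI[of _ "\<lambda>p. \<Sum>n<bumps_near p0. a n *\<^sub>R bump_term \<theta> n p"])
      (auto intro!: smooth_map_sum smooth_map_scaleR smooth_map_const smooth_map_bump_term)
qed

lemma smooth_map_bump_sum: "smooth_map (bump_sum a)"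
proof (rule smooth_map_locally)
  fix p0
  show "\<exists>S h. open S \<and> p0 \<in> S \<and> smooth_map h \<and> (\<forall>y\<in>S. bump_sum a y = h y)"
    using bump_sum_local open_inner_self_less
    by (intro exI[of _ "{p. p \<bullet> p < p0 \<bullet> p0 + 1}"] exI[of _ "\<lambda>p. \<Sum>n<bumps_near p0. a n * annulus_bump n p"])
      (auto intro!: smooth_map_sum smooth_map_mult smooth_map_const smooth_map_annulus_bump)
qed

lemma bump_sum_pos:
  assumes a: "\<And>n. a n > 0"
  shows "bump_sum a p > 0"
proof -
  define n0 where "n0 = nat \<lfloor>p \<bullet> p\<rfloor>"
  have "\<bar>p \<bullet> p - real n0\<bar> < 1"
    unfolding n0_def using inner_ge_zero[of p] by linarith
  then have "a n0 * annulus_bump n0 p > 0"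
    using a annulus_bump_pos by simp
  moreover have "n0 \<in> {..<nat \<lceil>p \<bullet> p\<rceil> + 1}"
    unfolding n0_def by (simp add: le_nat_iff nat_le_iff) linarith
  moreover have "a n * annulus_bump n p \<ge> 0" for n
    using a[of n] annulus_bump_nonneg[of n p] by simp
  ultimately show ?thesis
    unfolding bump_sum_def by (intro sum_pos2[where i=n0]) auto
qed

lemma pD_bump_term:
  assumes "set us \<subseteq> Basis"
  shows "pD (bump_term \<theta> n) us p = pD (annulus_bump n) us p *\<^sub>R fst \<theta> +
    pD (fibre_bump n 1) us p *\<^sub>R fst (snd \<theta>) + pD (fibre_bump n 2) us p *\<^sub>R snd (snd \<theta>)"
proof -
  have lin: "pD (\<lambda>p. f p *\<^sub>R c) us = (\<lambda>p. pD f us p *\<^sub>R c)" if "smooth_map f"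
    for f :: "tangent_point \<Rightarrow> real" and c :: "real^2"
    using pD_bounded_linear[OF bounded_linear_scaleR_left[of c] that assms] by simp
  have sm: "smooth_map (\<lambda>p. f p *\<^sub>R c)" if "smooth_map f" for f :: "tangent_point \<Rightarrow> real" and c :: "real^2"
    by (intro smooth_map_scaleR that smooth_map_const)
  show ?thesis
    unfolding bump_term_def[abs_def]
    by (simp add: pD_add[OF smooth_map_add, OF sm sm sm] pD_add[OF sm sm] assms lin
        smooth_map_annulus_bump smooth_map_fibre_bump sm)
qed

lemma norm_pD_bump_term_le:
  assumes "us \<in> basis_words k" "norm (fst \<theta>) \<le> 1" "norm (fst (snd \<theta>)) \<le> 1" "norm (snd (snd \<theta>)) \<le> 1"
  shows "norm (pD (bump_term \<theta> n) us p) \<le> bump_jet_bound k n p"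
proof -
  let ?A = "pD (annulus_bump n) us p" and ?B = "pD (fibre_bump n 1) us p" and ?C = "pD (fibre_bump n 2) us p"
  have "set us \<subseteq> Basis" using assms(1) unfolding basis_words_def by auto
  then have "norm (pD (bump_term \<theta> n) us p) =
      norm (?A *\<^sub>R fst \<theta> + ?B *\<^sub>R fst (snd \<theta>) + ?C *\<^sub>R snd (snd \<theta>))"
    by (simp only: pD_bump_term)
  also have "\<dots> \<le> \<bar>?A\<bar> * norm (fst \<theta>) + \<bar>?B\<bar> * norm (fst (snd \<theta>)) + \<bar>?C\<bar> * norm (snd (snd \<theta>))"
    using norm_triangle_ineq[of "?A *\<^sub>R fst \<theta> + ?B *\<^sub>R fst (snd \<theta>)" "?C *\<^sub>R snd (snd \<theta>)"]
      norm_triangle_ineq[of "?A *\<^sub>R fst \<theta>" "?B *\<^sub>R fst (snd \<theta>)"]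
    by (simp only: norm_scaleR)
  also have "\<dots> \<le> \<bar>?A\<bar> + \<bar>?B\<bar> + \<bar>?C\<bar>"
    using assms(2-4) by (intro add_mono mult_right_le_one_le) auto
  also have "\<dots> \<le> bump_jet_bound k n p"
    unfolding bump_jet_bound_def by (rule member_le_sum[OF assms(1)]) (auto simp: finite_basis_words)
  finally show ?thesis .
qed

lemma pD_bump_term_outside_annulus:
  assumes "p \<notin> annulus n"
  shows "pD (bump_term \<theta> n) us p = 0"
proof -
  define S :: "tangent_point set" where "S = {q. q \<bullet> q < real n - 1} \<union> {q. real n + 1 < q \<bullet> q}"
  have S: "open S" "p \<in> S"
    using assms unfolding S_def annulus_def by (auto intro!: open_Un open_Collect_less continuous_intros)
  have "bump_term \<theta> n y = 0" if "y \<in> S" for y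
  proof -
    have "1 \<le> \<bar>y \<bullet> y - real n\<bar>" using that unfolding S_def by auto
    then show ?thesis unfolding bump_term_def fibre_bump_def using annulus_bump_eq_0 by simp
  qed
  then have "pD (bump_term \<theta> n) us p = pD (\<lambda>_. 0) us p"
    by (intro pD_cong_open[OF S(1) _ S(2)]) auto
  then show ?thesis by (simp add: pD_zero)
qed

lemma pD_perturbation_eq_sum:
  assumes "set us \<subseteq> Basis"
  shows "pD (perturbation a \<theta>) us p0 = (\<Sum>n<bumps_near p0. a n *\<^sub>R pD (bump_term \<theta> n) us p0)"
proof -
  have "pD (perturbation a \<theta>) us p0 = pD (\<lambda>p. \<Sum>n<bumps_near p0. a n *\<^sub>R bump_term \<theta> n p) us p0"
    by (rule pD_cong_open[OF open_inner_self_less[of "p0 \<bullet> p0 + 1"]]) (auto simp: perturbation_local)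
  also have "\<dots> = (\<Sum>n<bumps_near p0. pD (\<lambda>p. a n *\<^sub>R bump_term \<theta> n p) us p0)"
    by (subst pD_sum) (auto intro!: smooth_map_scaleR smooth_map_const smooth_map_bump_term assms)
  also have "\<dots> = (\<Sum>n<bumps_near p0. a n *\<^sub>R pD (bump_term \<theta> n) us p0)"
    using pD_bounded_linear[OF bounded_linear_scaleR_right smooth_map_bump_term assms] by simp
  finally show ?thesis .
qed

lemma norm_pD_perturbation_less:
  assumes a: "\<And>n. a n > 0" "\<And>n p. p \<in> annulus n \<Longrightarrow> a n * bump_jet_bound k n p \<le> \<delta> p / 4 * (1/2)^n"
    and \<delta>: "\<delta> p0 > 0"
    and us: "us \<in> basis_words k"
    and \<theta>: "norm (fst \<theta>) \<le> 1" "norm (fst (snd \<theta>)) \<le> 1" "norm (snd (snd \<theta>)) \<le> 1"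
  shows "norm (pD (perturbation a \<theta>) us p0) < \<delta> p0"
proof -
  let ?N = "bumps_near p0"
  have summand: "norm (a n *\<^sub>R pD (bump_term \<theta> n) us p0) \<le> \<delta> p0 / 4 * (1/2)^n" for n
  proof (cases "p0 \<in> annulus n")
    case True
    have "norm (a n *\<^sub>R pD (bump_term \<theta> n) us p0) = a n * norm (pD (bump_term \<theta> n) us p0)"
      using a(1)[of n] by simp
    also have "\<dots> \<le> a n * bump_jet_bound k n p0"
      using norm_pD_bump_term_le[OF us \<theta>] a(1)[of n] by (intro mult_left_mono) auto
    also have "\<dots> \<le> \<delta> p0 / 4 * (1/2)^n"
      using a(2)[OF True] .
    finally show ?thesis .
  next
    case False
    then show ?thesis using pD_bump_term_outside_annulus[OF False] \<delta> by simp
  qed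
  have "set us \<subseteq> Basis"
    using us unfolding basis_words_def by auto
  then have "pD (perturbation a \<theta>) us p0 = (\<Sum>n<?N. a n *\<^sub>R pD (bump_term \<theta> n) us p0)"
    by (rule pD_perturbation_eq_sum)
  then have "norm (pD (perturbation a \<theta>) us p0) \<le> (\<Sum>n<?N. norm (a n *\<^sub>R pD (bump_term \<theta> n) us p0))"
    by (simp only: norm_sum)
  also have "\<dots> \<le> (\<Sum>n<?N. \<delta> p0 / 4 * (1/2)^n)"
    by (intro sum_mono summand)
  also have "\<dots> = \<delta> p0 / 4 * (\<Sum>n<?N. (1/2)^n)"
    by (simp add: sum_distrib_left)
  also have "\<dots> \<le> \<delta> p0 / 4 * 2"
  proof -
    have "(\<Sum>n<?N. (1/2::real)^n) = (1 - (1/2)^?N) / (1 - 1/2)"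
      by (subst sum_gp_strict) simp
    also have "\<dots> \<le> 2" by simp
    finally show ?thesis using \<delta> by (intro mult_left_mono) auto
  qed
  also have "\<dots> < \<delta> p0" using \<delta> by simp
  finally show ?thesis .
qed

lemma perturbation_zero_section: "perturbation a \<theta> (x, 0) = bump_sum a (x, 0) *\<^sub>R fst \<theta>"
  unfolding perturbation_def fibre_affine_def by simp

definition param_column :: "perturbation_param \<Rightarrow> 2 \<Rightarrow> real^2" where
  "param_column \<theta> j = (if j = 1 then fst (snd \<theta>) else snd (snd \<theta>))"

text \<open>\<open>bump_sum a\<close> is even in the fibre variable, so its fibre derivative vanishes on the zero section.\<close>

lemma fibre_partial_perturbation:
  "fibre_partial (perturbation a \<theta>) j x = bump_sum a (x, 0) *\<^sub>R param_column \<theta> j"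
proof -
  let ?u = "(0::real^2, axis j 1 :: real^2)"
  let ?g = "\<lambda>t. bump_sum a ((x, 0) + t *\<^sub>R ?u)"
  have "(?g has_vector_derivative pD (bump_sum a) [?u] (x, 0)) (at 0)"
    by (rule smooth_map_has_vector_derivative[OF smooth_map_bump_sum axis_fibre_in_Basis])
  then have g: "(?g has_real_derivative pD (bump_sum a) [?u] (x, 0)) (at 0)"
    by (simp add: has_real_derivative_iff_has_vector_derivative)
  have "?g (- t) = ?g t" for t
    unfolding bump_sum_def annulus_bump_def by (simp add: inner_commute)
  then have g0: "pD (bump_sum a) [?u] (x, 0) = 0"
    by (rule even_has_real_derivative_0[OF g])
  have "fibre_affine \<theta> ((x, 0) + t *\<^sub>R ?u) = fst \<theta> + t *\<^sub>R param_column \<theta> j" for t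
    unfolding fibre_affine_def param_column_def using exhaust_2[of j] by (auto simp: axis_def)
  moreover have "((\<lambda>t. fst \<theta> + t *\<^sub>R param_column \<theta> j) has_vector_derivative param_column \<theta> j) (at 0)"
    by (auto intro!: derivative_eq_intros)
  then have "((\<lambda>t. ?g t *\<^sub>R (fst \<theta> + t *\<^sub>R param_column \<theta> j)) has_vector_derivative
      ?g 0 *\<^sub>R param_column \<theta> j + pD (bump_sum a) [?u] (x, 0) *\<^sub>R (fst \<theta> + 0 *\<^sub>R param_column \<theta> j)) (at 0)"
    by (rule has_vector_derivative_scaleR[OF g])
  ultimately have "((\<lambda>t. perturbation a \<theta> ((x, 0) + t *\<^sub>R ?u)) has_vector_derivative
      bump_sum a (x, 0) *\<^sub>R param_column \<theta> j) (at 0)"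
    unfolding perturbation_def g0 by simp
  then show ?thesis
    unfolding fibre_partial_def by (rule pD_single_eqI)
qed

section \<open>Genericity\<close>

lemma fibre_partial_add:
  "smooth_map F \<Longrightarrow> smooth_map G \<Longrightarrow>
    fibre_partial (\<lambda>p. F p + G p) j x = fibre_partial F j x + fibre_partial G j x"
  unfolding fibre_partial_def by (subst pD_add) (auto simp: axis_fibre_in_Basis)

text \<open>\<open>singular_zero_param E F\<^sub>0 c\<^sub>1 c\<^sub>2 (x, \<phi>, \<alpha>, \<beta>)\<close> is the parameter \<open>\<theta>\<close> for which \<open>F + perturbation a \<theta>\<close>
  vanishes at \<open>(x, 0)\<close> with fibre Jacobian columns \<open>\<alpha> polar_dir \<phi>\<close> and \<open>\<beta> polar_dir \<phi>\<close>, where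
  \<open>E, F\<^sub>0, c\<^sub>j\<close> are \<open>bump_sum a\<close>, \<open>F\<close> and \<open>fibre_partial F j\<close> on the zero section. It is a map from a
  5-dimensional space into the 6-dimensional parameter space.\<close>

definition singular_zero_param ::
  "(real^2 \<Rightarrow> real) \<Rightarrow> (real^2 \<Rightarrow> real^2) \<Rightarrow> (real^2 \<Rightarrow> real^2) \<Rightarrow> (real^2 \<Rightarrow> real^2) \<Rightarrow>
     (real^2) \<times> real \<times> real \<times> real \<Rightarrow> perturbation_param" where
  "singular_zero_param E F0 c1 c2 z =
     ((1 / E (fst z)) *\<^sub>R (- F0 (fst z)),
      (1 / E (fst z)) *\<^sub>R (fst (snd (snd z)) *\<^sub>R polar_dir (fst (snd z)) - c1 (fst z)),
      (1 / E (fst z)) *\<^sub>R (snd (snd (snd z)) *\<^sub>R polar_dir (fst (snd z)) - c2 (fst z)))"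

lemma negligible_range_singular_zero_param:
  assumes "\<And>x. E differentiable (at x)" "\<And>x. E x \<noteq> 0" "\<And>x. F0 differentiable (at x)"
    "\<And>x. c1 differentiable (at x)" "\<And>x. c2 differentiable (at x)"
  shows "negligible (range (singular_zero_param E F0 c1 c2))"
proof (rule negligible_differentiable_image_lowdim)
  have base: "(\<lambda>z::(real^2) \<times> real \<times> real \<times> real. f (fst z)) differentiable (at z)"
    if "\<And>x. f differentiable (at x)" for f :: "real^2 \<Rightarrow> 'b::real_normed_vector" and z
    by (rule differentiable_compose[OF that]) (auto intro: bounded_linear_imp_differentiable bounded_linear_fst)
  have proj: "(\<lambda>z::(real^2) \<times> real \<times> real \<times> real. fst (snd z)) differentiable (at z)"
    "(\<lambda>z::(real^2) \<times> real \<times> real \<times> real. fst (snd (snd z))) differentiable (at z)"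
    "(\<lambda>z::(real^2) \<times> real \<times> real \<times> real. snd (snd (snd z))) differentiable (at z)" for z
    by (auto intro!: bounded_linear_imp_differentiable bounded_linear_compose[OF bounded_linear_fst]
        bounded_linear_compose[OF bounded_linear_snd] bounded_linear_snd)
  have dir: "(\<lambda>z::(real^2) \<times> real \<times> real \<times> real. polar_dir (fst (snd z))) differentiable (at z)" for z
    by (rule differentiable_compose[OF differentiable_polar_dir proj(1)])
  have inv: "(\<lambda>z::(real^2) \<times> real \<times> real \<times> real. 1 / E (fst z)) differentiable (at z)" for z
    by (rule differentiable_divide[OF differentiable_const base[OF assms(1)] assms(2)])
  show "singular_zero_param E F0 c1 c2 differentiable_on UNIV"
    unfolding differentiable_on_def singular_zero_param_def
    using base[OF assms(3)] base[OF assms(4)] base[OF assms(5)] inv dir proj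
    by (auto intro!: differentiable_Pair differentiable_scaleR differentiable_diff differentiable_minus)
qed simp

lemma perturbation_fibre_regular:
  assumes F: "smooth_map F" and a: "\<And>n. a n > 0"
    and \<theta>: "\<theta> \<notin> range (singular_zero_param (\<lambda>x. bump_sum a (x, 0)) (\<lambda>x. F (x, 0))
      (fibre_partial F 1) (fibre_partial F 2))"
  shows "fibre_regular (\<lambda>p. F p + perturbation a \<theta> p)"
  unfolding fibre_regular_def
proof (intro allI impI notI)
  fix x
  let ?G = "\<lambda>p. F p + perturbation a \<theta> p" and ?E = "bump_sum a (x, 0)"
  assume G0: "?G (x, 0) = 0" and singular: "fibre_jacobian_det ?G x = 0"
  from singular obtain \<phi> \<alpha> \<beta> where
    cols: "fibre_partial ?G 1 x = \<alpha> *\<^sub>R polar_dir \<phi>" "fibre_partial ?G 2 x = \<beta> *\<^sub>R polar_dir \<phi>"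
    unfolding fibre_jacobian_det_def by (rule det2_eq_0_imp_common_direction)
  have E: "?E \<noteq> 0"
    using bump_sum_pos[OF a] by (simp add: less_imp_neq[symmetric])
  have G_col: "fibre_partial ?G j x = fibre_partial F j x + ?E *\<^sub>R param_column \<theta> j" for j
    using fibre_partial_add[OF F smooth_map_perturbation] fibre_partial_perturbation by simp
  have "F (x, 0) + ?E *\<^sub>R fst \<theta> = 0"
    using G0 by (simp add: perturbation_zero_section)
  then have "?E *\<^sub>R fst \<theta> = - F (x, 0)"
    by (simp add: eq_neg_iff_add_eq_0 add.commute)
  then have "(1 / ?E) *\<^sub>R (?E *\<^sub>R fst \<theta>) = (1 / ?E) *\<^sub>R (- F (x, 0))"
    by simp
  then have "fst \<theta> = (1 / ?E) *\<^sub>R (- F (x, 0))"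
    using E by simp
  moreover have "fst (snd \<theta>) = (1 / ?E) *\<^sub>R (\<alpha> *\<^sub>R polar_dir \<phi> - fibre_partial F 1 x)"
    using G_col[of 1] cols(1) E unfolding param_column_def by (simp add: algebra_simps)
  moreover have "snd (snd \<theta>) = (1 / ?E) *\<^sub>R (\<beta> *\<^sub>R polar_dir \<phi> - fibre_partial F 2 x)"
    using G_col[of 2] cols(2) E unfolding param_column_def by (simp add: algebra_simps)
  ultimately have "\<theta> = singular_zero_param (\<lambda>x. bump_sum a (x, 0)) (\<lambda>x. F (x, 0))
      (fibre_partial F 1) (fibre_partial F 2) (x, \<phi>, \<alpha>, \<beta>)"
    unfolding singular_zero_param_def by (simp add: prod_eq_iff)
  then show False using \<theta> by blast
qed

lemma perturbation_in_whitney_nbhd: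
  assumes F: "smooth_map F"
    and a: "\<And>n. a n > 0" "\<And>n p. p \<in> annulus n \<Longrightarrow> a n * bump_jet_bound k n p \<le> \<delta> p / 4 * (1/2)^n"
    and \<delta>: "\<And>p. 0 < \<delta> p" and \<theta>: "norm \<theta> < 1"
  shows "(\<lambda>p. F p + perturbation a \<theta> p) \<in> whitney_nbhd F k \<delta>"
  unfolding whitney_nbhd_def
proof (intro CollectI conjI allI impI)
  show "smooth_map (\<lambda>p. F p + perturbation a \<theta> p)"
    by (intro smooth_map_add F smooth_map_perturbation)
  have "norm (fst \<theta>) \<le> 1" "norm (snd \<theta>) \<le> 1"
    using \<theta> norm_fst_le[of "fst \<theta>" "snd \<theta>"] norm_snd_le[of "snd \<theta>" "fst \<theta>"] by simp_all
  then have \<theta>': "norm (fst \<theta>) \<le> 1" "norm (fst (snd \<theta>)) \<le> 1" "norm (snd (snd \<theta>)) \<le> 1"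
    using norm_fst_le[of "fst (snd \<theta>)" "snd (snd \<theta>)"] norm_snd_le[of "snd (snd \<theta>)" "fst (snd \<theta>)"]
    by simp_all
  fix us :: "tangent_point list" and p
  assume us: "set us \<subseteq> Basis \<and> length us \<le> k"
  then have "us \<in> basis_words k"
    unfolding basis_words_def by simp
  then have "norm (pD (perturbation a \<theta>) us p) < \<delta> p"
    using norm_pD_perturbation_less[OF a \<delta> _ \<theta>'] by blast
  then show "norm (pD (\<lambda>p. F p + perturbation a \<theta> p) us p - pD F us p) < \<delta> p"
    using us by (simp add: pD_add[OF F smooth_map_perturbation])
qed

lemma whitney_dense_fibre_regular_systems: "whitney_dense fibre_regular_systems"
  unfolding whitney_dense_def
proof (intro allI impI)
  fix F :: implicit_system and k :: nat and \<delta> :: "tangent_point \<Rightarrow> real"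
  assume "smooth_map F \<and> continuous_on UNIV \<delta> \<and> (\<forall>p. 0 < \<delta> p)"
  then have F: "smooth_map F" and \<delta>: "continuous_on UNIV \<delta>" "\<And>p. 0 < \<delta> p" by auto
  have "\<forall>n. \<exists>a>0. \<forall>p\<in>annulus n. a * bump_jet_bound k n p \<le> \<delta> p / 4 * (1/2)^n"
    using exists_bump_weight[OF \<delta>] by blast
  then obtain a where a: "\<And>n. a n > 0" "\<And>n p. p \<in> annulus n \<Longrightarrow> a n * bump_jet_bound k n p \<le> \<delta> p / 4 * (1/2)^n"
    by metis
  let ?\<Phi> = "singular_zero_param (\<lambda>x. bump_sum a (x, 0)) (\<lambda>x. F (x, 0)) (fibre_partial F 1) (fibre_partial F 2)"
  have "bump_sum a (x, 0) \<noteq> 0" for x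
    using bump_sum_pos[of a "(x, 0)", OF a(1)] by simp
  moreover have "fibre_partial F j differentiable (at x)" for j x
    unfolding fibre_partial_def[abs_def]
    by (rule differentiable_zero_section_restrict[OF smooth_map_pD[OF F]]) (simp add: axis_fibre_in_Basis)
  ultimately have "negligible (range ?\<Phi>)"
    by (intro negligible_range_singular_zero_param differentiable_zero_section_restrict
        smooth_map_bump_sum F)
  then have "\<not> ball 0 1 \<subseteq> range ?\<Phi>"
    using negligible_subset open_not_negligible[of "ball (0::perturbation_param) 1"] by auto
  then obtain \<theta> where \<theta>: "\<theta> \<in> ball 0 1" "\<theta> \<notin> range ?\<Phi>"
    by blast
  then have "norm \<theta> < 1"
    by simp
  with \<theta>(2) have "(\<lambda>p. F p + perturbation a \<theta> p) \<in> whitney_nbhd F k \<delta> \<inter> fibre_regular_systems"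
    unfolding fibre_regular_systems_def
    using perturbation_in_whitney_nbhd[where a=a, OF F a \<delta>(2)]
      perturbation_fibre_regular[where a=a, OF F a(1)]
      smooth_map_add[OF F smooth_map_perturbation] by auto
  then show "whitney_nbhd F k \<delta> \<inter> fibre_regular_systems \<noteq> {}" by blast
qed

theorem proposition3:
  shows "generic (\<lambda>F :: implicit_system. locally_bounded_derivatives F \<longrightarrow>
           (\<forall>p. folding_critical F p \<longrightarrow> p \<notin> zero_section) \<and>
           (\<forall>p. folding_critical F p \<longrightarrow>
              (\<exists>S. open S \<and> p \<in> S \<and> S \<inter> zero_section = {})))"
  unfolding generic_def
proof (intro exI[of _ fibre_regular_systems] conjI ballI impI allI
    whitney_open_fibre_regular_systems whitney_dense_fibre_regular_systems)
  fix F p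
  assume "F \<in> fibre_regular_systems"
  then have no_crit: "folding_critical F p \<Longrightarrow> p \<notin> zero_section" for p
    unfolding fibre_regular_systems_def using fibre_regular_not_folding_critical by blast
  then show "folding_critical F p \<Longrightarrow> p \<notin> zero_section" .
  have "open (- zero_section)"
    unfolding zero_section_def by (intro open_Compl closed_Collect_eq continuous_intros)
  then show "\<exists>S. open S \<and> p \<in> S \<and> S \<inter> zero_section = {}" if "folding_critical F p"
    using no_crit[OF that] by (intro exI[of _ "- zero_section"]) auto
qed

end
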